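(* Fix a partition $[n]=U\sqcup D$ and the associated map $\eta$ from $S_n$ to triangulations of the polygon $Q$ described below. Then the fibers of $\eta$ are exactly the congruence classes of a lattice congruence on the weak order on $S_n$.
   Context: $S_n$ is the set of permutations of $[n]=\{1,\dots,n\}$ in one-line notation $x=x_1\cdots x_n$. The weak order: $x\le y$ iff $I(x)\subseteq I(y)$ where $I(x)=\{(x_j,x_i): i<j,\ x_i>x_j\}$; it is a lattice. Let $Q$ be a convex polygon in $\mathbb R^2$ with vertices $v_0,v_1,\dots,v_{n+1}$ whose $x$-coordinates strictly increase with the index, with $v_0,v_{n+1}$ on the $x$-axis, such that $v_i$ has positive $y$-coordinate for $i\in U$ ("up indices") and negative $y$-coordinate for $i\in D$ ("down indices"). A diagonal is a segment joining two non-adjacent vertices; a triangulation is a maximal set of pairwise non-crossing diagonals. For $x\in S_n$ define polygonal paths $\lambda_0(x),\dots,\lambda_n(x)$ from $v_0$ to $v_{n+1}$, each visiting its vertices in increasing order of index: $\lambda_0(x)$ visits $v_0$, the $v_i$ with $i\in D$, and $v_{n+1}$; for $i\ge1$, $\lambda_i(x)$ is obtained from $\lambda_{i-1}(x)$ by deleting the vertex $v_{x_i}$ if $x_i\in D$ and by adding the vertex $v_{x_i}$ if $x_i\in U$. Then $\eta(x)$ is the triangulation of $Q$ consisting of all diagonals of $Q$ that occur as edges of some $\lambda_i(x)$. A lattice congruence is an equivalence relation compatible with meets and joins. *)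

theory Defs
  imports Main "HOL-Combinatorics.Multiset_Permutations"
begin

text \<open>Permutations of [n] in one-line notation: x = x_1 ... x_n is the list
  [x!0, ..., x!(n-1)] (so x_i = x ! (i - 1)).\<close>

definition Sn :: "nat \<Rightarrow> nat list set" where
  "Sn n = permutations_of_set {1..n}"

definition inversions :: "nat list \<Rightarrow> (nat \<times> nat) set" where
  "inversions x = {(x ! j, x ! i) | i j. i < j \<and> j < length x \<and> x ! i > x ! j}"

definition weak_le :: "nat list \<Rightarrow> nat list \<Rightarrow> bool" where
  "weak_le x y \<longleftrightarrow> inversions x \<subseteq> inversions y"

definition is_weak_meet :: "nat \<Rightarrow> nat list \<Rightarrow> nat list \<Rightarrow> nat list \<Rightarrow> bool" where
  "is_weak_meet n x y m \<longleftrightarrow> m \<in> Sn n \<and> weak_le m x \<and> weak_le m y \<and>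
     (\<forall>w\<in>Sn n. weak_le w x \<and> weak_le w y \<longrightarrow> weak_le w m)"

definition is_weak_join :: "nat \<Rightarrow> nat list \<Rightarrow> nat list \<Rightarrow> nat list \<Rightarrow> bool" where
  "is_weak_join n x y j \<longleftrightarrow> j \<in> Sn n \<and> weak_le x j \<and> weak_le y j \<and>
     (\<forall>w\<in>Sn n. weak_le x w \<and> weak_le y w \<longrightarrow> weak_le j w)"

definition weak_lattice_congruence :: "nat \<Rightarrow> (nat list \<times> nat list) set \<Rightarrow> bool" where
  "weak_lattice_congruence n R \<longleftrightarrow> equiv (Sn n) R \<and>
     (\<forall>x y z m m'. (x, y) \<in> R \<and> z \<in> Sn n \<and> is_weak_meet n x z m \<and> is_weak_meet n y z m'
        \<longrightarrow> (m, m') \<in> R) \<and>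
     (\<forall>x y z j j'. (x, y) \<in> R \<and> z \<in> Sn n \<and> is_weak_join n x z j \<and> is_weak_join n y z j'
        \<longrightarrow> (j, j') \<in> R)"

text \<open>Polygon Q with vertices v_0, ..., v_(n+1), identified with their indices.
  A monotone path from v_0 to v_(n+1) visiting its vertices in increasing index
  order is determined by its vertex set S; its edges are the pairs (a,b), a < b,
  of consecutive elements of S.\<close>
definition path_edges :: "nat set \<Rightarrow> (nat \<times> nat) set" where
  "path_edges S = {(a, b). a \<in> S \<and> b \<in> S \<and> a < b \<and> (\<forall>c\<in>S. \<not> (a < c \<and> c < b))}"

text \<open>Boundary edges of the convex polygon Q: the upper chain v_0, (v_i)_{i in U}, v_(n+1)
  and the lower chain v_0, (v_i)_{i in D}, v_(n+1).\<close>
definition Q_edges :: "nat \<Rightarrow> nat set \<Rightarrow> nat set \<Rightarrow> (nat \<times> nat) set" where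
  "Q_edges n U D = path_edges ({0, n + 1} \<union> U) \<union> path_edges ({0, n + 1} \<union> D)"

definition Q_diagonals :: "nat \<Rightarrow> nat set \<Rightarrow> nat set \<Rightarrow> (nat \<times> nat) set" where
  "Q_diagonals n U D = {(a, b). a < b \<and> b \<le> n + 1} - Q_edges n U D"

fun lam_step :: "nat set \<Rightarrow> nat set \<Rightarrow> nat \<Rightarrow> nat set" where
  "lam_step D S k = (if k \<in> D then S - {k} else S \<union> {k})"

definition lam :: "nat \<Rightarrow> nat set \<Rightarrow> nat list \<Rightarrow> nat \<Rightarrow> nat set" where
  "lam n D x i = foldl (lam_step D) ({0, n + 1} \<union> D) (take i x)"

definition eta :: "nat \<Rightarrow> nat set \<Rightarrow> nat set \<Rightarrow> nat list \<Rightarrow> (nat \<times> nat) set" where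
  "eta n U D x = {e \<in> Q_diagonals n U D. \<exists>i\<le>n. e \<in> path_edges (lam n D x i)}"

end

(*
  Let lambda(R) be the path through v_0, v_(n+1), the down vertices outside R and the up vertices
  in R, so that lambda_i(x) = lambda({x_1, ..., x_i}). Swapping an adjacent ascent u < v of x that
  is preceded by the letters R (a flip) keeps eta(x) when lambda(R) has a vertex strictly between
  v_u and v_v: every edge of lambda(R + u) is then an edge of lambda(R) or of lambda(R + u + v).
  Conversely, two permutations with the same eta are connected by flips and their inverses
  (move the first letter of one to the front of the other). Flips terminate and are locally
  confluent, so by Newman's lemma two permutations in one fibre flip to a common permutation.
  If x flips to x' by swapping a < c and w is the join of x and z with a before c, then the join
  of x' and z arises from w by putting the letters between a and c that exceed c in front of c a
  and those below a behind it; the vertex separating a and c separates every new inversion, so w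
  flips to it. Hence fibres are compatible with joins, and with meets by reversing permutations,
  which exchanges U and D and turns meets into joins.
*)
theory Submission
  imports Defs "HOL-Library.Confluence"
begin

fun precedes :: "'a list \<Rightarrow> 'a \<Rightarrow> 'a \<Rightarrow> bool" where
  "precedes [] p q \<longleftrightarrow> False"
| "precedes (a # xs) p q \<longleftrightarrow> (a = p \<and> q \<in> set xs) \<or> precedes xs p q"

lemma precedes_set: "precedes xs p q \<Longrightarrow> p \<in> set xs \<and> q \<in> set xs"
  by (induction xs) auto

lemma precedes_append:
  "precedes (xs @ ys) p q \<longleftrightarrow> precedes xs p q \<or> precedes ys p q \<or> (p \<in> set xs \<and> q \<in> set ys)"
  by (induction xs) (auto dest: precedes_set)

lemma precedes_filter: "precedes (filter P xs) p q \<longleftrightarrow> P p \<and> P q \<and> precedes xs p q"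
  by (induction xs) (auto dest: precedes_set)

lemma precedes_rev: "precedes (rev xs) p q \<longleftrightarrow> precedes xs q p"
  by (induction xs) (auto simp: precedes_append dest: precedes_set)

lemma precedes_iff_nth:
  "precedes xs p q \<longleftrightarrow> (\<exists>i j. i < j \<and> j < length xs \<and> xs ! i = p \<and> xs ! j = q)"
proof (induction xs)
  case (Cons a xs)
  show ?case
  proof
    assume "precedes (a # xs) p q"
    then consider "a = p" "q \<in> set xs" | "precedes xs p q" by auto
    then show "\<exists>i j. i < j \<and> j < length (a # xs) \<and> (a # xs) ! i = p \<and> (a # xs) ! j = q"
    proof cases
      case 1
      then obtain j where "j < length xs" "xs ! j = q" by (auto simp: in_set_conv_nth)
      then show ?thesis using 1 by (intro exI[of _ 0] exI[of _ "Suc j"]) auto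
    next
      case 2
      then obtain i j where "i < j" "j < length xs" "xs ! i = p" "xs ! j = q" using Cons.IH by auto
      then show ?thesis by (intro exI[of _ "Suc i"] exI[of _ "Suc j"]) auto
    qed
  next
    assume "\<exists>i j. i < j \<and> j < length (a # xs) \<and> (a # xs) ! i = p \<and> (a # xs) ! j = q"
    then obtain i j where ij: "i < j" "j < length (a # xs)" "(a # xs) ! i = p" "(a # xs) ! j = q"
      by blast
    then obtain j' where j': "j = Suc j'" by (cases j) auto
    show "precedes (a # xs) p q"
    proof (cases i)
      case 0
      then show ?thesis using ij j' by auto
    next
      case (Suc i')
      then show ?thesis using Cons.IH ij j' by auto
    qed
  qed
qed simp

lemma precedes_nth:
  "distinct xs \<Longrightarrow> i < length xs \<Longrightarrow> j < length xs \<Longrightarrow> precedes xs (xs ! i) (xs ! j) \<longleftrightarrow> i < j"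
  by (auto simp: precedes_iff_nth nth_eq_iff_index_eq)

lemma precedes_asym: "distinct xs \<Longrightarrow> precedes xs p q \<Longrightarrow> \<not> precedes xs q p"
  by (auto simp: precedes_iff_nth nth_eq_iff_index_eq)

lemma precedes_trans: "distinct xs \<Longrightarrow> precedes xs p q \<Longrightarrow> precedes xs q r \<Longrightarrow> precedes xs p r"
  by (auto simp: precedes_iff_nth nth_eq_iff_index_eq) (metis order_less_trans)

lemma precedes_total:
  "p \<in> set xs \<Longrightarrow> q \<in> set xs \<Longrightarrow> p \<noteq> q \<Longrightarrow> precedes xs p q \<or> precedes xs q p"
  by (auto simp: precedes_iff_nth in_set_conv_nth) (metis linorder_neqE_nat)

lemma list_eq_if_precedes_imp:
  assumes "distinct xs" "distinct ys" "set xs = set ys" "\<And>p q. precedes xs p q \<Longrightarrow> precedes ys p q"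
  shows "xs = ys"
  using assms
proof (induction xs arbitrary: ys)
  case (Cons a xs)
  then obtain b ys' where ys: "ys = b # ys'" by (cases ys) auto
  have "a = b"
  proof (rule ccontr)
    assume "a \<noteq> b"
    then have "precedes (a # xs) a b" using Cons.prems(3) ys by auto
    then show False using Cons.prems(2,4) ys \<open>a \<noteq> b\<close> by (auto dest: precedes_set)
  qed
  moreover have "xs = ys'"
  proof (rule Cons.IH)
    show "set xs = set ys'" using Cons.prems ys \<open>a = b\<close> by (auto simp: insert_ident)
    show "precedes ys' p q" if "precedes xs p q" for p q
      using that Cons.prems(1) Cons.prems(4)[of p q] ys \<open>a = b\<close> by (auto dest: precedes_set)
  qed (use Cons.prems ys in auto)
  ultimately show ?case using ys by simp
qed simp

lemma precedes_split: "precedes xs p q \<Longrightarrow> \<exists>as bs cs. xs = as @ p # bs @ q # cs"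
proof (induction xs)
  case (Cons a xs)
  show ?case
  proof (cases "a = p \<and> q \<in> set xs")
    case True
    then obtain bs cs where "xs = bs @ q # cs" by (meson split_list)
    then show ?thesis using True by (intro exI[of _ "[]"] exI[of _ bs] exI[of _ cs]) auto
  next
    case False
    then obtain as bs cs where "xs = as @ p # bs @ q # cs" using Cons by auto
    then show ?thesis by (intro exI[of _ "a # as"] exI[of _ bs] exI[of _ cs]) auto
  qed
qed simp

lemma precedes_before_iff:
  assumes "distinct (X @ a # Y)"
  shows "precedes (X @ a # Y) s a \<longleftrightarrow> s \<in> set X"
  using assms by (auto simp: precedes_append dest: precedes_set)

lemma precedes_after_iff:
  assumes "distinct (X @ a # Y)"
  shows "precedes (X @ a # Y) a s \<longleftrightarrow> s \<in> set Y"
  using assms by (auto simp: precedes_append dest: precedes_set)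

lemma precedes_replace_block:
  assumes "distinct (\<alpha> @ K @ \<gamma>)" "set K' = set K"
  shows "precedes (\<alpha> @ K' @ \<gamma>) p q \<longleftrightarrow>
    (if p \<in> set K \<and> q \<in> set K then precedes K' p q else precedes (\<alpha> @ K @ \<gamma>) p q)"
proof -
  have "precedes (\<alpha> @ X @ \<gamma>) p q \<longleftrightarrow> precedes \<alpha> p q \<or> precedes X p q \<or> precedes \<gamma> p q \<or>
      (p \<in> set \<alpha> \<and> (q \<in> set X \<or> q \<in> set \<gamma>)) \<or> (p \<in> set X \<and> q \<in> set \<gamma>)" for X
    by (auto simp: precedes_append)
  moreover have "set \<alpha> \<inter> set K = {}" "set \<alpha> \<inter> set \<gamma> = {}" "set K \<inter> set \<gamma> = {}" using assms(1) by auto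
  ultimately show ?thesis using assms(2) precedes_set[of \<alpha> p q] precedes_set[of \<gamma> p q]
      precedes_set[of K p q] precedes_set[of K' p q] by auto
qed


lemma split_at_adjacent: "Suc i < length xs \<Longrightarrow> xs = take i xs @ xs ! i # xs ! Suc i # drop (Suc (Suc i)) xs"
  by (metis Cons_nth_drop_Suc Suc_lessD append_take_drop_id)

lemma Sn_iff: "x \<in> Sn n \<longleftrightarrow> distinct x \<and> set x = {1..n}"
  unfolding Sn_def permutations_of_set_def by auto

lemma Sn_length: "x \<in> Sn n \<Longrightarrow> length x = n"
  unfolding Sn_iff using distinct_card by fastforce

lemma inversions_eq: "inversions x = {(p, q). p < q \<and> precedes x q p}"
  unfolding inversions_def precedes_iff_nth by auto

lemma inversions_swap:
  assumes "distinct (A @ u # v # B)" "u < v"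
  shows "inversions (A @ v # u # B) = insert (u, v) (inversions (A @ u # v # B))"
  using assms unfolding inversions_eq by (auto simp: precedes_append dest: precedes_set)

lemma ascent_notin_inversions: "distinct (A @ u # v # B) \<Longrightarrow> (u, v) \<notin> inversions (A @ u # v # B)"
  unfolding inversions_eq by (auto simp: precedes_append dest: precedes_set)

lemma inversions_Sn_subset:
  "x \<in> Sn n \<Longrightarrow> inversions x \<subseteq> {(p, q). p < q \<and> p \<in> {1..n} \<and> q \<in> {1..n}}"
  unfolding inversions_eq Sn_iff by (auto dest: precedes_set)

lemma finite_inversions:
  assumes "x \<in> Sn n"
  shows "finite (inversions x)"
proof (rule finite_subset)
  show "inversions x \<subseteq> {1..n} \<times> {1..n}" using inversions_Sn_subset[OF assms] by auto
qed simp

lemma adjacent_inversion_if_less: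
  assumes "distinct v" "distinct w" "set v = set w" "inversions v \<subseteq> inversions w" "v \<noteq> w"
  shows "\<exists>A p q B. v = A @ p # q # B \<and> (p, q) \<in> inversions w"
proof (rule ccontr)
  assume "\<not> ?thesis"
  then have no_adjacent: "(p, q) \<notin> inversions w" if "v = A @ p # q # B" for A p q B
    using that by blast
  have "precedes w (v ! i) (v ! Suc i)" if i: "Suc i < length v" for i
  proof -
    have not_inv: "(v ! i, v ! Suc i) \<notin> inversions w"
      using no_adjacent[OF split_at_adjacent[OF i]] .
    have in_v: "precedes v (v ! i) (v ! Suc i)" using i assms(1) by (simp add: precedes_nth)
    have in_w: "v ! i \<in> set w" "v ! Suc i \<in> set w" using i assms(3) by (metis Suc_lessD nth_mem)+
    have "v ! i \<noteq> v ! Suc i" using i assms(1) by (simp add: nth_eq_iff_index_eq)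
    then consider "v ! i < v ! Suc i" | "v ! Suc i < v ! i" by linarith
    then show ?thesis
    proof cases
      case 1
      then show ?thesis
        using not_inv precedes_total[OF in_w] \<open>v ! i \<noteq> v ! Suc i\<close> unfolding inversions_eq by auto
    next
      case 2
      then have "(v ! Suc i, v ! i) \<in> inversions v" using in_v unfolding inversions_eq by simp
      then show ?thesis using assms(4) unfolding inversions_eq by auto
    qed
  qed
  then have "sorted_wrt (precedes w) v"
    using assms(2) by (subst sorted_wrt_iff_nth_Suc_transp) (auto intro: transpI precedes_trans)
  then have "precedes w p q" if "precedes v p q" for p q
    using that by (auto simp: precedes_iff_nth sorted_wrt_iff_nth_less)
  then show False using list_eq_if_precedes_imp[OF assms(1-3)] assms(5) by blast
qed

lemma Sn_eq_if_inversions_eq: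
  assumes "x \<in> Sn n" "y \<in> Sn n" "inversions x = inversions y"
  shows "x = y"
proof (rule ccontr)
  assume "x \<noteq> y"
  then obtain A p q B where x: "x = A @ p # q # B" and "(p, q) \<in> inversions x"
    using adjacent_inversion_if_less[of x y] assms unfolding Sn_iff by auto
  moreover have "distinct (A @ p # q # B)" using assms(1) x by (simp add: Sn_iff)
  ultimately show False using ascent_notin_inversions by metis
qed

lemma weak_join_unique: "is_weak_join n x z j1 \<Longrightarrow> is_weak_join n x z j2 \<Longrightarrow> j1 = j2"
  unfolding is_weak_join_def weak_le_def by (meson Sn_eq_if_inversions_eq subset_antisym)

lemma inversions_rev:
  assumes "x \<in> Sn n"
  shows "inversions (rev x) = {(p, q). p < q \<and> p \<in> {1..n} \<and> q \<in> {1..n}} - inversions x"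
  using assms precedes_total[of _ x] unfolding Sn_iff inversions_eq precedes_rev
  by (auto dest: precedes_set precedes_asym)

lemma weak_le_rev:
  assumes "a \<in> Sn n" "b \<in> Sn n"
  shows "weak_le (rev a) (rev b) \<longleftrightarrow> weak_le b a"
  unfolding weak_le_def inversions_rev[OF assms(1)] inversions_rev[OF assms(2)]
  using inversions_Sn_subset[OF assms(1)] inversions_Sn_subset[OF assms(2)] by blast

lemma rev_Sn: "x \<in> Sn n \<Longrightarrow> rev x \<in> Sn n"
  unfolding Sn_iff by simp

lemma weak_join_rev_if_meet:
  assumes "x \<in> Sn n" "z \<in> Sn n" "is_weak_meet n x z m"
  shows "is_weak_join n (rev x) (rev z) (rev m)"
  unfolding is_weak_join_def
proof (intro conjI ballI impI)
  have m: "m \<in> Sn n" "weak_le m x" "weak_le m z"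
    and greatest: "\<And>w. w \<in> Sn n \<Longrightarrow> weak_le w x \<Longrightarrow> weak_le w z \<Longrightarrow> weak_le w m"
    using assms(3) unfolding is_weak_meet_def by auto
  show "rev m \<in> Sn n" using m(1) by (rule rev_Sn)
  show "weak_le (rev x) (rev m)" "weak_le (rev z) (rev m)"
    using weak_le_rev assms(1,2) m by auto
  fix w assume "w \<in> Sn n" "weak_le (rev x) w \<and> weak_le (rev z) w"
  then show "weak_le (rev m) w"
    using greatest[of "rev w"] weak_le_rev[of _ n "rev w"] rev_Sn assms(1,2) m(1) by auto
qed

lemma set_rotated_block:
  fixes a c :: nat
  assumes "\<forall>v\<in>set \<beta>. v < a \<or> c < v"
  shows "set (filter ((<) c) \<beta> @ c # a # filter (\<lambda>v. v < a) \<beta>) = set (a # \<beta> @ [c])"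
proof -
  have "set (filter ((<) c) \<beta> @ c # a # filter (\<lambda>v. v < a) \<beta>) =
      {c, a} \<union> {v \<in> set \<beta>. c < v} \<union> {v \<in> set \<beta>. v < a}" by auto
  also have "\<dots> = set (a # \<beta> @ [c])" using assms by force
  finally show ?thesis .
qed

lemma distinct_rotated_block:
  fixes a c :: nat
  assumes "distinct (\<alpha> @ a # \<beta> @ c # \<gamma>)" "a < c" "\<forall>v\<in>set \<beta>. v < a \<or> c < v"
  shows "distinct (\<alpha> @ filter ((<) c) \<beta> @ c # a # filter (\<lambda>v. v < a) \<beta> @ \<gamma>)"
proof -
  have "distinct (filter ((<) c) \<beta> @ c # a # filter (\<lambda>v. v < a) \<beta>)"
    using assms(1,2) by auto
  moreover have "set (\<alpha> @ \<gamma>) \<inter> set (filter ((<) c) \<beta> @ c # a # filter (\<lambda>v. v < a) \<beta>) = {}"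
    using assms(1) unfolding set_rotated_block[OF assms(3)] by auto
  ultimately show ?thesis using assms(1) by auto
qed

lemma precedes_rotated_block:
  fixes a c :: nat
  assumes "distinct (a # \<beta> @ [c])" "a < c" "\<forall>v\<in>set \<beta>. v < a \<or> c < v" "p < q"
  shows "precedes (filter ((<) c) \<beta> @ c # a # filter (\<lambda>v. v < a) \<beta>) q p \<longleftrightarrow>
    precedes (a # \<beta> @ [c]) q p \<or> ((p = a \<or> p \<in> set \<beta> \<and> p < a) \<and> (q = c \<or> q \<in> set \<beta> \<and> c < q))"
proof -
  have "precedes (filter ((<) c) \<beta> @ c # a # filter (\<lambda>v. v < a) \<beta>) q p \<longleftrightarrow>
      (c < q \<and> c < p \<and> precedes \<beta> q p) \<or> (c = q \<and> (p = a \<or> p \<in> set \<beta> \<and> p < a)) \<or>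
      (a = q \<and> p \<in> set \<beta> \<and> p < a) \<or> (q < a \<and> p < a \<and> precedes \<beta> q p) \<or>
      (q \<in> set \<beta> \<and> c < q \<and> (p = c \<or> p = a \<or> p \<in> set \<beta> \<and> p < a))"
    by (simp add: precedes_append precedes_filter)
  moreover have "precedes (a # \<beta> @ [c]) q p \<longleftrightarrow>
      (a = q \<and> (p = c \<or> p \<in> set \<beta>)) \<or> precedes \<beta> q p \<or> (q \<in> set \<beta> \<and> p = c)"
    by (simp add: precedes_append)
  ultimately show ?thesis using assms precedes_set[of \<beta> q p] by fastforce
qed

lemma inversions_rotate_block:
  fixes a c :: nat
  assumes "distinct (\<alpha> @ a # \<beta> @ c # \<gamma>)" "a < c" "\<forall>v\<in>set \<beta>. v < a \<or> c < v"
  shows "inversions (\<alpha> @ filter ((<) c) \<beta> @ c # a # filter (\<lambda>v. v < a) \<beta> @ \<gamma>) =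
    inversions (\<alpha> @ a # \<beta> @ c # \<gamma>) \<union> insert a {v \<in> set \<beta>. v < a} \<times> insert c {v \<in> set \<beta>. c < v}"
    (is "inversions ?w' = inversions ?w \<union> ?new")
proof -
  define K where "K = a # \<beta> @ [c]"
  define K' where "K' = filter ((<) c) \<beta> @ c # a # filter (\<lambda>v. v < a) \<beta>"
  have w: "?w = \<alpha> @ K @ \<gamma>" and w': "?w' = \<alpha> @ K' @ \<gamma>" unfolding K_def K'_def by simp_all
  have dK: "distinct (\<alpha> @ K @ \<gamma>)" using assms(1) w by simp
  have "set K' = set K" using set_rotated_block[OF assms(3)] unfolding K_def K'_def .
  note block = precedes_replace_block[OF dK this] and same_block = precedes_replace_block[OF dK refl]
  have precedes_w': "precedes ?w' q p \<longleftrightarrow> precedes ?w q p \<or> (p, q) \<in> ?new" if "p < q" for p q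
  proof (cases "q \<in> set K \<and> p \<in> set K")
    case True
    then have "precedes ?w' q p \<longleftrightarrow> precedes K' q p" "precedes ?w q p \<longleftrightarrow> precedes K q p"
      unfolding w w' by (subst block same_block; simp)+
    moreover have "distinct (a # \<beta> @ [c])" using assms(1) by auto
    moreover have "(p, q) \<in> ?new \<longleftrightarrow> (p = a \<or> p \<in> set \<beta> \<and> p < a) \<and> (q = c \<or> q \<in> set \<beta> \<and> c < q)"
      by auto
    ultimately show ?thesis
      using precedes_rotated_block[of a \<beta> c p q] assms(2,3) that unfolding K_def K'_def by (simp only:)
  next
    case False
    then have "precedes ?w' q p \<longleftrightarrow> precedes ?w q p"
      unfolding w w' block[of q p] using False by (simp only: if_False if_not_P)
    moreover have "(p, q) \<notin> ?new" using False unfolding K_def by auto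
    ultimately show ?thesis by blast
  qed
  have new_less: "p < q" if "(p, q) \<in> ?new" for p q using that assms(2) by auto
  have "(p, q) \<in> inversions ?w' \<longleftrightarrow> (p, q) \<in> inversions ?w \<union> ?new" for p q
    using precedes_w'[of p q] new_less[of p q] unfolding inversions_eq by auto
  then show ?thesis by auto
qed

lemma letters_between_outside_interval:
  assumes "distinct (\<alpha> @ a # \<beta> @ c # \<gamma>)" "set (\<alpha> @ a # \<beta> @ c # \<gamma>) = set (A @ a # c # B)"
    and "inversions (A @ a # c # B) \<subseteq> inversions (\<alpha> @ a # \<beta> @ c # \<gamma>)"
  shows "\<forall>v\<in>set \<beta>. v < a \<or> c < v"
proof (rule ccontr)
  assume "\<not> ?thesis"
  then obtain v where "v \<in> set \<beta>" "\<not> v < a" "\<not> c < v" by blast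
  moreover have "v \<noteq> a" "v \<noteq> c" using assms(1) calculation(1) by auto
  ultimately have v: "v \<in> set \<beta>" "a < v" "v < c" by auto
  then have "v \<in> set A \<or> v \<in> set B" using assms(1,2) by auto
  then have "(a, v) \<in> inversions (\<alpha> @ a # \<beta> @ c # \<gamma>) \<or> (v, c) \<in> inversions (\<alpha> @ a # \<beta> @ c # \<gamma>)"
    using assms(3) v(2,3) unfolding inversions_eq by (auto simp: precedes_append)
  moreover have "precedes (\<alpha> @ a # \<beta> @ c # \<gamma>) a v" "precedes (\<alpha> @ a # \<beta> @ c # \<gamma>) v c"
    using v(1) by (simp_all add: precedes_append)
  ultimately show False using precedes_asym[OF assms(1)] unfolding inversions_eq by auto
qed

lemma weak_join_insert_inversion:
  assumes "is_weak_join n x z w" "inversions x' = insert e (inversions x)" "e \<in> inversions w"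
  shows "is_weak_join n x' z w"
  using assms unfolding is_weak_join_def weak_le_def by auto

lemma weak_join_after_ascent_swap:
  assumes x: "A @ a # c # B \<in> Sn n" and "a < c" and join: "is_weak_join n (A @ a # c # B) z w"
    and w: "w = \<alpha> @ a # \<beta> @ c # \<gamma>"
  defines "w' \<equiv> \<alpha> @ filter ((<) c) \<beta> @ c # a # filter (\<lambda>v. v < a) \<beta> @ \<gamma>"
  shows "is_weak_join n (A @ c # a # B) z w'"
    and "inversions w' = inversions w \<union> insert a {v \<in> set \<beta>. v < a} \<times> insert c {v \<in> set \<beta>. c < v}"
proof -
  have wS: "w \<in> Sn n" and xw: "inversions (A @ a # c # B) \<subseteq> inversions w" and zw: "inversions z \<subseteq> inversions w"
    and least: "\<And>u. u \<in> Sn n \<Longrightarrow> inversions (A @ a # c # B) \<subseteq> inversions u \<Longrightarrow> inversions z \<subseteq> inversions u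
      \<Longrightarrow> inversions w \<subseteq> inversions u"
    using join unfolding is_weak_join_def weak_le_def by auto
  have dx: "distinct (A @ a # c # B)" and dw: "distinct (\<alpha> @ a # \<beta> @ c # \<gamma>)"
    using x wS w unfolding Sn_iff by auto
  have "set (\<alpha> @ a # \<beta> @ c # \<gamma>) = set (A @ a # c # B)" using x wS w unfolding Sn_iff by simp
  with dw xw w have outside: "\<forall>v\<in>set \<beta>. v < a \<or> c < v" by (intro letters_between_outside_interval) simp_all
  show inv_w': "inversions w' = inversions w \<union> insert a {v \<in> set \<beta>. v < a} \<times> insert c {v \<in> set \<beta>. c < v}"
    unfolding w'_def w using inversions_rotate_block[OF dw \<open>a < c\<close> outside] .
  have inv_x': "inversions (A @ c # a # B) = insert (a, c) (inversions (A @ a # c # B))"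
    using inversions_swap[OF dx \<open>a < c\<close>] .
  show "is_weak_join n (A @ c # a # B) z w'"
    unfolding is_weak_join_def weak_le_def
  proof (intro conjI ballI impI)
    show "w' \<in> Sn n"
      using wS distinct_rotated_block[OF dw \<open>a < c\<close> outside] set_rotated_block[OF outside]
      unfolding w'_def w Sn_iff by auto
    show "inversions (A @ c # a # B) \<subseteq> inversions w'" "inversions z \<subseteq> inversions w'"
      using inv_w' inv_x' xw zw by auto
    fix u assume u: "u \<in> Sn n" "inversions (A @ c # a # B) \<subseteq> inversions u \<and> inversions z \<subseteq> inversions u"
    then have wu: "inversions w \<subseteq> inversions u" using least inv_x' by auto
    have du: "distinct u" using u(1) unfolding Sn_iff by simp
    have ca: "precedes u c a" using u(2) inv_x' \<open>a < c\<close> unfolding inversions_eq by auto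
    have "(p, q) \<in> inversions u" if "p = a \<or> p \<in> set \<beta> \<and> p < a" "q = c \<or> q \<in> set \<beta> \<and> c < q" for p q
    proof -
      have "p = a \<or> precedes u a p"
        using that(1) wu w unfolding inversions_eq by (auto simp: precedes_append)
      moreover have "q = c \<or> precedes u q c"
        using that(2) wu w unfolding inversions_eq by (auto simp: precedes_append)
      ultimately have "precedes u q p" using ca precedes_trans[OF du] by metis
      moreover have "p < q" using that \<open>a < c\<close> by auto
      ultimately show ?thesis unfolding inversions_eq by simp
    qed
    then show "inversions w' \<subseteq> inversions u" using inv_w' wu by auto
  qed
qed

lemma confluentp_if_terminating_locally_confluent:
  assumes terminating: "wfp r\<inverse>\<inverse>"
    and local_confluence: "\<And>a b c. r a b \<Longrightarrow> r a c \<Longrightarrow> \<exists>d. r\<^sup>*\<^sup>* b d \<and> r\<^sup>*\<^sup>* c d"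
  shows "confluentp r"
proof (rule confluentpI)
  show "\<exists>u. r\<^sup>*\<^sup>* y u \<and> r\<^sup>*\<^sup>* z u" if "r\<^sup>*\<^sup>* x y" "r\<^sup>*\<^sup>* x z" for x y z
    using terminating that
  proof (induction x arbitrary: y z rule: wfp_induct_rule)
    case (less x)
    show ?case
    proof (cases "x = y \<or> x = z")
      case True
      then show ?thesis using less.prems by blast
    next
      case False
      then obtain y1 z1 where "r x y1" "r\<^sup>*\<^sup>* y1 y" "r x z1" "r\<^sup>*\<^sup>* z1 z"
        using less.prems by (metis converse_rtranclpE)
      moreover obtain d where "r\<^sup>*\<^sup>* y1 d" "r\<^sup>*\<^sup>* z1 d"
        using local_confluence \<open>r x y1\<close> \<open>r x z1\<close> by blast
      moreover obtain e where "r\<^sup>*\<^sup>* y e" "r\<^sup>*\<^sup>* d e"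
        using less.IH \<open>r x y1\<close> \<open>r\<^sup>*\<^sup>* y1 y\<close> \<open>r\<^sup>*\<^sup>* y1 d\<close> by blast
      moreover have "r\<^sup>*\<^sup>* z1 e" using \<open>r\<^sup>*\<^sup>* z1 d\<close> \<open>r\<^sup>*\<^sup>* d e\<close> by simp
      moreover obtain u where "r\<^sup>*\<^sup>* z u" "r\<^sup>*\<^sup>* e u"
        using less.IH \<open>r x z1\<close> \<open>r\<^sup>*\<^sup>* z1 z\<close> \<open>r\<^sup>*\<^sup>* z1 e\<close> by blast
      ultimately show ?thesis by (meson rtranclp_trans)
    qed
  qed
qed

text \<open>\<open>weighted_sum xs = (\<Sum>i<length xs. i * xs ! i)\<close>; it strictly decreases when an adjacent
  ascent is swapped, which makes flips terminate.\<close>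

fun weighted_sum :: "nat list \<Rightarrow> nat" where
  "weighted_sum [] = 0"
| "weighted_sum (x # xs) = weighted_sum xs + sum_list xs"

lemma weighted_sum_swap: "weighted_sum (A @ v # u # B) + v = weighted_sum (A @ u # v # B) + u"
  by (induction A) auto

lemma two_adjacent_pairs_cases:
  assumes "A1 @ u1 # v1 # B1 = A2 @ u2 # v2 # B2" "length A1 < length A2"
  shows "(A2 = A1 @ [u1] \<and> u2 = v1 \<and> B1 = v2 # B2) \<or> (\<exists>C. A2 = A1 @ u1 # v1 # C \<and> B1 = C @ u2 # v2 # B2)"
  using assms
proof (induction A1 arbitrary: A2)
  case Nil
  then show ?case by (cases A2; cases "tl A2") auto
next
  case (Cons a A1)
  then show ?case by (cases A2) auto
qed

lemma path_edge_local:
  assumes "S1 \<inter> {lo..hi} = S2 \<inter> {lo..hi}"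
  shows "(lo, hi) \<in> path_edges S1 \<longleftrightarrow> (lo, hi) \<in> path_edges S2"
proof (cases "lo < hi")
  case True
  have agree: "x \<in> S1 \<longleftrightarrow> x \<in> S2" if "lo \<le> x" "x \<le> hi" for x
    using assms that by (metis IntI Int_iff atLeastAtMost_iff)
  have "(\<forall>c\<in>S1. \<not> (lo < c \<and> c < hi)) \<longleftrightarrow> (\<forall>c\<in>S2. \<not> (lo < c \<and> c < hi))"
    using agree less_imp_le by blast
  moreover have "lo \<in> S1 \<longleftrightarrow> lo \<in> S2" "hi \<in> S1 \<longleftrightarrow> hi \<in> S2" using agree True by auto
  ultimately show ?thesis unfolding path_edges_def by simp
qed (simp add: path_edges_def)

lemma path_edge_spanning:
  assumes "finite S" "a < b" "s0 \<in> S" "s0 \<le> a" "s1 \<in> S" "b \<le> s1" "\<forall>c\<in>S. \<not> (a < c \<and> c < b)"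
  obtains lo hi where "(lo, hi) \<in> path_edges S" "lo \<le> a" "b \<le> hi"
proof
  let ?lo = "Max {s \<in> S. s \<le> a}" and ?hi = "Min {s \<in> S. b \<le> s}"
  have "?lo \<in> {s \<in> S. s \<le> a}" using assms(1,3,4) by (intro Max_in) auto
  moreover have "s \<le> ?lo" if "s \<in> S" "s \<le> a" for s using assms(1) that by (intro Max_ge) auto
  ultimately have lo: "?lo \<in> S" "?lo \<le> a" "\<And>s. s \<in> S \<Longrightarrow> s \<le> a \<Longrightarrow> s \<le> ?lo" by auto
  have "?hi \<in> {s \<in> S. b \<le> s}" using assms(1,5,6) by (intro Min_in) auto
  moreover have "?hi \<le> s" if "s \<in> S" "b \<le> s" for s using assms(1) that by (intro Min_le) auto
  ultimately have hi: "?hi \<in> S" "b \<le> ?hi" "\<And>s. s \<in> S \<Longrightarrow> b \<le> s \<Longrightarrow> ?hi \<le> s" by auto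
  show "(?lo, ?hi) \<in> path_edges S"
    unfolding path_edges_def using lo hi assms(2,7) by (auto simp: not_less intro: le_trans)
  show "?lo \<le> a" "b \<le> ?hi" using lo hi by auto
qed

locale polygon_partition =
  fixes n :: nat and U D :: "nat set"
  assumes partition: "U \<union> D = {1..n}" "U \<inter> D = {}"
begin

definition path_verts :: "nat set \<Rightarrow> nat set" where
  "path_verts R = {0, n + 1} \<union> (D - R) \<union> (U \<inter> R)"

lemma path_verts_iff: "s \<in> {1..n} \<Longrightarrow> s \<in> path_verts R \<longleftrightarrow> (s \<in> R \<longleftrightarrow> s \<in> U)"
  unfolding path_verts_def using partition by auto

lemma path_verts_outside: "s \<notin> {1..n} \<Longrightarrow> s \<in> path_verts R \<longleftrightarrow> s = 0 \<or> s = n + 1"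
  unfolding path_verts_def using partition by auto

lemma path_verts_insert: "s \<noteq> u \<Longrightarrow> s \<in> path_verts (insert u R) \<longleftrightarrow> s \<in> path_verts R"
  unfolding path_verts_def by auto

lemma path_verts_subset: "path_verts R \<subseteq> {0..n + 1}"
proof -
  have "U \<subseteq> {1..n}" "D \<subseteq> {1..n}" using partition by auto
  then show ?thesis unfolding path_verts_def by auto
qed

lemma lam_eq_path_verts:
  assumes "x \<in> Sn n"
  shows "lam n D x i = path_verts (set (take i x))"
proof -
  have fold: "foldl (lam_step D) (path_verts R) ks = path_verts (R \<union> set ks)"
    if "set ks \<subseteq> {1..n}" for ks R
    using that
  proof (induction ks arbitrary: R)
    case (Cons k ks)
    have "lam_step D (path_verts R) k = path_verts (insert k R)"
      using Cons.prems partition unfolding path_verts_def by auto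
    then show ?case using Cons by simp
  qed simp
  have "{0, n + 1} \<union> D = path_verts {}" unfolding path_verts_def by auto
  then have "lam n D x i = foldl (lam_step D) (path_verts {}) (take i x)" unfolding lam_def by simp
  also have "\<dots> = path_verts ({} \<union> set (take i x))"
    by (rule fold) (use assms in \<open>auto simp: Sn_iff dest: in_set_takeD\<close>)
  finally show ?thesis by simp
qed

lemma path_edge_iff_agree:
  assumes edge: "(lo, hi) \<in> path_edges (path_verts R1)"
  shows "(lo, hi) \<in> path_edges (path_verts R2) \<longleftrightarrow> (\<forall>s\<in>{1..n}. lo \<le> s \<longrightarrow> s \<le> hi \<longrightarrow> (s \<in> R1 \<longleftrightarrow> s \<in> R2))"
proof
  assume "(lo, hi) \<in> path_edges (path_verts R2)"
  then have "s \<in> path_verts R1 \<longleftrightarrow> s \<in> path_verts R2" if "lo \<le> s" "s \<le> hi" for s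
    using edge that unfolding path_edges_def by (auto simp: le_less)
  then show "\<forall>s\<in>{1..n}. lo \<le> s \<longrightarrow> s \<le> hi \<longrightarrow> (s \<in> R1 \<longleftrightarrow> s \<in> R2)"
    using path_verts_iff by blast
next
  assume agree: "\<forall>s\<in>{1..n}. lo \<le> s \<longrightarrow> s \<le> hi \<longrightarrow> (s \<in> R1 \<longleftrightarrow> s \<in> R2)"
  have "s \<in> path_verts R1 \<longleftrightarrow> s \<in> path_verts R2" if "lo \<le> s" "s \<le> hi" for s
    using agree that path_verts_iff[of s] path_verts_outside[of s] by (cases "s \<in> {1..n}") auto
  then have "path_verts R1 \<inter> {lo..hi} = path_verts R2 \<inter> {lo..hi}" by auto
  then show "(lo, hi) \<in> path_edges (path_verts R2)" using edge path_edge_local by blast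
qed

lemma Q_diagonals_eq:
  "Q_diagonals n U D =
     {(lo, hi). lo < hi \<and> hi \<le> n + 1} - path_edges (path_verts {}) - path_edges (path_verts {1..n})"
proof -
  have "path_verts {} = {0, n + 1} \<union> D" "path_verts {1..n} = {0, n + 1} \<union> U"
    unfolding path_verts_def using partition by auto
  then show ?thesis unfolding Q_diagonals_def Q_edges_def by auto
qed

definition separated :: "nat set \<Rightarrow> nat \<Rightarrow> nat \<Rightarrow> bool" where
  "separated R u v \<longleftrightarrow> (\<exists>s\<in>path_verts R. min u v < s \<and> s < max u v)"

lemma separated_commute: "separated R u v \<longleftrightarrow> separated R v u"
  unfolding separated_def by (auto simp: min.commute max.commute)

lemma path_edge_before_or_after:
  assumes edge: "(lo, hi) \<in> path_edges (path_verts (insert u R))" and "separated R u v"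
  shows "(lo, hi) \<in> path_edges (path_verts R) \<or> (lo, hi) \<in> path_edges (path_verts (insert v (insert u R)))"
proof (cases "lo \<le> u \<and> u \<le> hi \<and> lo \<le> v \<and> v \<le> hi")
  case True
  obtain s where "s \<in> path_verts R" "min u v < s" "s < max u v"
    using \<open>separated R u v\<close> unfolding separated_def by blast
  moreover have "s \<notin> path_verts (insert u R)"
    using edge True calculation unfolding path_edges_def by auto
  ultimately show ?thesis using path_verts_insert[of s u R] by auto
next
  case False
  then show ?thesis using path_edge_iff_agree[OF edge] by auto
qed

text \<open>The letters of \<open>P\<close> count as processed before those of the list; an adjacent ascent
  may be swapped when the path at that moment has a vertex strictly between its two letters.\<close>

definition flip :: "nat set \<Rightarrow> nat list \<Rightarrow> nat list \<Rightarrow> bool" where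
  "flip P xs ys \<longleftrightarrow>
     (\<exists>A u v B. xs = A @ u # v # B \<and> ys = A @ v # u # B \<and> u < v \<and> separated (P \<union> set A) u v)"

definition swept :: "nat set \<Rightarrow> nat list \<Rightarrow> (nat \<times> nat) set" where
  "swept P xs = {e \<in> Q_diagonals n U D. \<exists>t\<le>length xs. e \<in> path_edges (path_verts (P \<union> set (take t xs)))}"

lemma swept_memI:
  "e \<in> Q_diagonals n U D \<Longrightarrow> t \<le> length xs \<Longrightarrow> e \<in> path_edges (path_verts (P \<union> set (take t xs)))
    \<Longrightarrow> e \<in> swept P xs"
  unfolding swept_def by (intro CollectI conjI exI[of _ t])

lemma swept_memE:
  assumes "e \<in> swept P xs"
  obtains t where "e \<in> Q_diagonals n U D" "t \<le> length xs" "e \<in> path_edges (path_verts (P \<union> set (take t xs)))"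
  using assms unfolding swept_def by blast

lemma eta_eq_swept: "x \<in> Sn n \<Longrightarrow> eta n U D x = swept {} x"
  unfolding eta_def swept_def by (simp add: lam_eq_path_verts Sn_length)

lemma swept_swap_subset:
  assumes "separated (P \<union> set A) u v"
  shows "swept P (A @ u # v # B) \<subseteq> swept P (A @ v # u # B)"
proof
  fix e assume "e \<in> swept P (A @ u # v # B)"
  then obtain t where e: "e \<in> Q_diagonals n U D" "t \<le> length (A @ u # v # B)"
    "e \<in> path_edges (path_verts (P \<union> set (take t (A @ u # v # B))))"
    unfolding swept_def by blast
  obtain lo hi where e_eq: "e = (lo, hi)" by (cases e)
  have at: "e \<in> swept P (A @ v # u # B)"
    if "t' \<le> length (A @ v # u # B)" "e \<in> path_edges (path_verts (P \<union> set (take t' (A @ v # u # B))))" for t'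
    using that e(1) unfolding swept_def by blast
  consider "t \<le> length A" | "t = Suc (length A)" | "Suc (Suc (length A)) \<le> t" by linarith
  then show "e \<in> swept P (A @ v # u # B)"
  proof cases
    case 1
    then show ?thesis using e(2,3) by (intro at[of t]) auto
  next
    case 2
    then have "(lo, hi) \<in> path_edges (path_verts (insert u (P \<union> set A)))" using e(3) e_eq by simp
    from path_edge_before_or_after[OF this assms]
    show ?thesis
    proof (elim disjE)
      assume "(lo, hi) \<in> path_edges (path_verts (P \<union> set A))"
      then show ?thesis using e_eq by (intro at[of "length A"]) auto
    next
      assume "(lo, hi) \<in> path_edges (path_verts (insert v (insert u (P \<union> set A))))"
      then show ?thesis using e_eq by (intro at[of "Suc (Suc (length A))"]) (auto simp: insert_commute)
    qed
  next
    case 3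
    then have "set (take t (A @ v # u # B)) = set (take t (A @ u # v # B))"
      by (auto simp: take_Cons' split: if_splits)
    then show ?thesis using e(2,3) by (intro at[of t]) auto
  qed
qed

lemma swept_swap:
  assumes "separated (P \<union> set A) u v"
  shows "swept P (A @ u # v # B) = swept P (A @ v # u # B)"
proof (rule equalityI)
  show "swept P (A @ u # v # B) \<subseteq> swept P (A @ v # u # B)" using assms by (rule swept_swap_subset)
  show "swept P (A @ v # u # B) \<subseteq> swept P (A @ u # v # B)"
    using assms by (intro swept_swap_subset) (simp add: separated_commute)
qed

lemma swept_flip: "flip P xs ys \<Longrightarrow> swept P xs = swept P ys"
  unfolding flip_def using swept_swap by blast

lemma swept_eq_if_equivclp_flip: "equivclp (flip P) xs ys \<Longrightarrow> swept P xs = swept P ys"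
proof (induction rule: equivclp_induct)
  case (step y z)
  then show ?case using swept_flip[of P y z] swept_flip[of P z y] by auto
qed simp

lemma equivclp_flip_swap:
  assumes "separated (P \<union> set A) u v"
  shows "equivclp (flip P) (A @ u # v # B) (A @ v # u # B)"
proof -
  have "u \<noteq> v" using assms unfolding separated_def by auto
  then consider "u < v" | "v < u" by linarith
  then show ?thesis
  proof cases
    case 1
    then have "flip P (A @ u # v # B) (A @ v # u # B)" using assms unfolding flip_def by blast
    then show ?thesis by blast
  next
    case 2
    then have "flip P (A @ v # u # B) (A @ u # v # B)"
      using assms separated_commute unfolding flip_def by blast
    then show ?thesis by blast
  qed
qed

lemma equivclp_flip_move_to_front:
  assumes "\<And>A u B. ys = A @ u # B \<Longrightarrow> separated (P \<union> set A) u k"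
  shows "equivclp (flip P) (ys @ k # zs) (k # ys @ zs)"
  using assms
proof (induction ys arbitrary: zs rule: rev_induct)
  case (snoc u ys)
  have "equivclp (flip P) (ys @ u # k # zs) (ys @ k # u # zs)"
    using snoc.prems[of ys u "[]"] by (intro equivclp_flip_swap) simp
  also have "equivclp (flip P) (ys @ k # u # zs) (k # ys @ u # zs)"
    using snoc.IH[of "u # zs"] snoc.prems by fastforce
  finally show ?case by simp
qed simp

lemma equivclp_flip_Cons: "equivclp (flip (insert k P)) xs ys \<Longrightarrow> equivclp (flip P) (k # xs) (k # ys)"
proof (induction rule: equivclp_induct)
  case (step y z)
  have lift: "flip P (k # y) (k # z)" if flip_yz: "flip (insert k P) y z" for y z
  proof -
    obtain A u v B where "y = A @ u # v # B" "z = A @ v # u # B" "u < v" "separated (insert k P \<union> set A) u v"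
      using flip_yz unfolding flip_def by blast
    then show ?thesis unfolding flip_def by (intro exI[of _ "k # A"] exI[of _ u] exI[of _ v] exI[of _ B]) auto
  qed
  from step.hyps(2) have "flip P (k # y) (k # z) \<or> flip P (k # z) (k # y)" using lift by blast
  with step.IH show ?case by (rule equivclp_into_equivclp)
qed simp

lemma swept_Cons:
  assumes "k \<notin> P"
  shows "swept (insert k P) xs =
    swept P (k # xs) - {e. e \<in> path_edges (path_verts P) \<and> e \<notin> path_edges (path_verts (insert k P))}"
proof (intro equalityI subsetI)
  fix e assume "e \<in> swept (insert k P) xs"
  then obtain t where e: "e \<in> Q_diagonals n U D" "t \<le> length xs"
      "e \<in> path_edges (path_verts (insert k P \<union> set (take t xs)))"
    unfolding swept_def by blast
  obtain lo hi where e_eq: "e = (lo, hi)" by (cases e)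
  have "P \<union> set (take (Suc t) (k # xs)) = insert k P \<union> set (take t xs)" by simp
  then have "e \<in> swept P (k # xs)" using e(2,3) by (intro swept_memI[OF e(1), of "Suc t"]) simp_all
  moreover have "e \<in> path_edges (path_verts (insert k P))" if edge: "e \<in> path_edges (path_verts P)"
  proof -
    note agree_iff = path_edge_iff_agree[OF edge[unfolded e_eq]]
    have "\<forall>s\<in>{1..n}. lo \<le> s \<longrightarrow> s \<le> hi \<longrightarrow> (s \<in> P \<longleftrightarrow> s \<in> insert k P \<union> set (take t xs))"
      using e(3) unfolding e_eq agree_iff .
    then show ?thesis unfolding e_eq agree_iff using assms by auto
  qed
  ultimately show "e \<in> swept P (k # xs) - {e. e \<in> path_edges (path_verts P) \<and> e \<notin> path_edges (path_verts (insert k P))}"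
    by blast
next
  fix e assume "e \<in> swept P (k # xs) - {e. e \<in> path_edges (path_verts P) \<and> e \<notin> path_edges (path_verts (insert k P))}"
  then have swept_e: "e \<in> swept P (k # xs)"
    and kept: "e \<in> path_edges (path_verts P) \<Longrightarrow> e \<in> path_edges (path_verts (insert k P))"
    by auto
  from swept_e obtain t where e: "e \<in> Q_diagonals n U D" "t \<le> Suc (length xs)"
      "e \<in> path_edges (path_verts (P \<union> set (take t (k # xs))))"
    unfolding swept_def by auto
  show "e \<in> swept (insert k P) xs"
  proof (cases t)
    case 0
    then have "e \<in> path_edges (path_verts (insert k P))" using e(3) kept by simp
    then show ?thesis by (intro swept_memI[OF e(1), of 0]) simp_all
  next
    case (Suc t')
    then have "e \<in> path_edges (path_verts (insert k P \<union> set (take t' xs)))" "t' \<le> length xs"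
      using e(2,3) by simp_all
    then show ?thesis by (intro swept_memI[OF e(1)])
  qed
qed

lemma separated_if_swept_eq:
  assumes swept_eq: "swept P (k # xs) = swept P (A @ u # ys)"
    and "u \<in> {1..n}" "k \<in> {1..n}" "u \<notin> P" "k \<notin> P" "k \<notin> set A" "k \<noteq> u"
  shows "separated (P \<union> set A) u k"
proof (rule ccontr)
  assume not_sep: "\<not> separated (P \<union> set A) u k"
  \<comment> \<open>Then the edge of the path after \<open>A @ [u]\<close> spanning \<open>u\<close> and \<open>k\<close> is a diagonal swept by
    \<open>A @ u # ys\<close> but by no path of \<open>k # xs\<close>.\<close>
  define R where "R = insert u (P \<union> set A)"
  have no_between: "\<forall>c\<in>path_verts R. \<not> (min u k < c \<and> c < max u k)"
    using not_sep path_verts_insert unfolding separated_def R_def by fastforce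
  have ends: "0 \<in> path_verts R" "n + 1 \<in> path_verts R" unfolding path_verts_def by auto
  have "finite (path_verts R)" by (rule finite_subset[OF path_verts_subset]) simp
  moreover have "min u k < max u k" "max u k \<le> n + 1" using assms(2,3,7) by auto
  ultimately obtain lo hi where edge: "(lo, hi) \<in> path_edges (path_verts R)"
    and span: "lo \<le> min u k" "max u k \<le> hi"
    using path_edge_spanning[OF _ _ ends(1) _ ends(2) _ no_between] by auto
  note agree_iff = path_edge_iff_agree[OF edge]
  have "u \<in> R" "k \<notin> R" using assms(5-7) unfolding R_def by auto
  then have not_boundary: "(lo, hi) \<notin> path_edges (path_verts {})" "(lo, hi) \<notin> path_edges (path_verts {1..n})"
    using span assms(2,3) unfolding agree_iff by auto
  have "lo < hi" "hi \<le> n + 1"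
    using edge path_verts_subset[of R] unfolding path_edges_def by auto
  then have "(lo, hi) \<in> Q_diagonals n U D" using not_boundary unfolding Q_diagonals_eq by simp
  moreover have "P \<union> set (take (Suc (length A)) (A @ u # ys)) = R" unfolding R_def by auto
  ultimately have "(lo, hi) \<in> swept P (A @ u # ys)"
    using edge by (intro swept_memI[of _ "Suc (length A)"]) simp_all
  then have "(lo, hi) \<in> swept P (k # xs)" using swept_eq by simp
  then obtain t where "(lo, hi) \<in> path_edges (path_verts (P \<union> set (take t (k # xs))))"
    by (rule swept_memE)
  then have "\<forall>s\<in>{1..n}. lo \<le> s \<longrightarrow> s \<le> hi \<longrightarrow> (s \<in> R \<longleftrightarrow> s \<in> P \<union> set (take t (k # xs)))"
    unfolding agree_iff .
  then have "u \<in> R \<longleftrightarrow> u \<in> P \<union> set (take t (k # xs))" "k \<in> R \<longleftrightarrow> k \<in> P \<union> set (take t (k # xs))"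
    using span assms(2,3) by auto
  then show False using \<open>u \<in> R\<close> \<open>k \<notin> R\<close> assms(4,7) by (cases t) auto
qed

lemma equivclp_flip_if_swept_eq:
  "distinct xs \<Longrightarrow> distinct ys \<Longrightarrow> set xs = set ys \<Longrightarrow> set xs \<subseteq> {1..n} \<Longrightarrow> P \<inter> set xs = {} \<Longrightarrow>
    swept P xs = swept P ys \<Longrightarrow> equivclp (flip P) xs ys"
proof (induction xs arbitrary: P ys)
  case (Cons k xs)
  then obtain ys1 ys2 where ys: "ys = ys1 @ k # ys2" by (metis list.set_intros(1) split_list)
  have "separated (P \<union> set A) u k" if "ys1 = A @ u # B" for A u B
  proof (rule separated_if_swept_eq)
    show "swept P (k # xs) = swept P (A @ u # B @ k # ys2)" using Cons.prems(6) ys that by simp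
  qed (use Cons.prems ys that in auto)
  then have to_front: "equivclp (flip P) ys (k # ys1 @ ys2)"
    unfolding ys by (rule equivclp_flip_move_to_front)
  have "k \<notin> P" using Cons.prems(5) by auto
  have "swept (insert k P) xs = swept (insert k P) (ys1 @ ys2)"
    using Cons.prems(6) swept_eq_if_equivclp_flip[OF to_front] swept_Cons[OF \<open>k \<notin> P\<close>] by simp
  moreover have "distinct (ys1 @ ys2)" "set xs = set (ys1 @ ys2)"
    using Cons.prems(1-3) ys by auto
  ultimately have "equivclp (flip (insert k P)) xs (ys1 @ ys2)"
    using Cons.prems(1,4,5) by (intro Cons.IH) auto
  then have "equivclp (flip P) (k # xs) (k # ys1 @ ys2)" by (rule equivclp_flip_Cons)
  then show ?case using to_front by (blast intro: equivclp_trans equivclp_sym)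
qed simp

theorem eta_eq_iff_equivclp_flip:
  assumes "x \<in> Sn n" "y \<in> Sn n"
  shows "eta n U D x = eta n U D y \<longleftrightarrow> equivclp (flip {}) x y"
  using assms equivclp_flip_if_swept_eq[of x y "{}"] swept_eq_if_equivclp_flip[of "{}" x y]
  by (auto simp: eta_eq_swept Sn_iff)

lemma flip_intro:
  assumes "u < s" "s < v" "s \<in> path_verts (P \<union> set A)"
  shows "flip P (A @ u # v # B) (A @ v # u # B)"
  unfolding flip_def separated_def using assms
  by (intro exI[of _ A] exI[of _ u] exI[of _ v] exI[of _ B]) auto

lemma flip_weighted_sum:
  assumes "flip P xs ys"
  shows "weighted_sum ys < weighted_sum xs"
proof -
  obtain A u v B where "xs = A @ u # v # B" "ys = A @ v # u # B" "u < v"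
    using assms unfolding flip_def by blast
  then show ?thesis using weighted_sum_swap[of A v u B] by simp
qed

lemma flip_local_confluence_overlap:
  assumes "u < v" "v < w" "separated (P \<union> set A) u v" "separated (P \<union> insert u (set A)) v w"
  shows "\<exists>d. (flip P)\<^sup>*\<^sup>* (A @ v # u # w # B) d \<and> (flip P)\<^sup>*\<^sup>* (A @ u # w # v # B) d"
proof -
  obtain s where s: "u < s" "s < v" "s \<in> path_verts (P \<union> set A)"
    using assms(1,3) unfolding separated_def by auto
  obtain s' where s': "v < s'" "s' < w" "s' \<in> path_verts (P \<union> insert u (set A))"
    using assms(2,4) unfolding separated_def by auto
  have "s \<in> path_verts (P \<union> set (A @ [x]))" if "x \<noteq> s" for x
    using s(3) path_verts_insert[OF that[symmetric]] by simp
  moreover have "s' \<in> path_verts (P \<union> set A)"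
    using s' s(1,2) path_verts_insert[of s' u "P \<union> set A"] by simp
  ultimately have "flip P (A @ v # u # w # B) (A @ v # w # u # B)" "flip P (A @ v # w # u # B) (A @ w # v # u # B)"
    "flip P (A @ u # w # v # B) (A @ w # u # v # B)" "flip P (A @ w # u # v # B) (A @ w # v # u # B)"
    using flip_intro[of u s w P "A @ [v]" B] flip_intro[of v s' w P A "u # B"]
      flip_intro[of u s w P A "v # B"] flip_intro[of u s v P "A @ [w]" B] s s' by auto
  then show ?thesis by (meson converse_rtranclp_into_rtranclp r_into_rtranclp)
qed

lemma flip_local_confluence:
  assumes "flip P x y1" "flip P x y2"
  shows "\<exists>d. (flip P)\<^sup>*\<^sup>* y1 d \<and> (flip P)\<^sup>*\<^sup>* y2 d"
proof -
  have ordered: "\<exists>d. (flip P)\<^sup>*\<^sup>* (A1 @ v1 # u1 # B1) d \<and> (flip P)\<^sup>*\<^sup>* (A2 @ v2 # u2 # B2) d"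
    if eq: "A1 @ u1 # v1 # B1 = A2 @ u2 # v2 # B2" and len: "length A1 < length A2"
      and "u1 < v1" "u2 < v2" "separated (P \<union> set A1) u1 v1" "separated (P \<union> set A2) u2 v2"
    for A1 u1 v1 B1 A2 u2 v2 B2
    using two_adjacent_pairs_cases[OF eq len]
  proof (elim disjE exE conjE)
    assume "A2 = A1 @ [u1]" "u2 = v1" "B1 = v2 # B2"
    then show ?thesis using flip_local_confluence_overlap[of u1 v1 v2 P A1 B2] that(3-6) by simp
  next
    fix C assume C: "A2 = A1 @ u1 # v1 # C" "B1 = C @ u2 # v2 # B2"
    have "set (A1 @ v1 # u1 # C) = set A2" using C by auto
    then have "flip P (A1 @ v1 # u1 # B1) (A1 @ v1 # u1 # C @ v2 # u2 # B2)"
      using that(4,6) C unfolding flip_def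
      by (intro exI[of _ "A1 @ v1 # u1 # C"] exI[of _ u2] exI[of _ v2] exI[of _ B2]) simp
    moreover have "flip P (A2 @ v2 # u2 # B2) (A1 @ v1 # u1 # C @ v2 # u2 # B2)"
      using that(3,5) C unfolding flip_def
      by (intro exI[of _ A1] exI[of _ u1] exI[of _ v1] exI[of _ "C @ v2 # u2 # B2"]) auto
    ultimately show ?thesis by blast
  qed
  obtain A1 u1 v1 B1 where first: "x = A1 @ u1 # v1 # B1" "y1 = A1 @ v1 # u1 # B1" "u1 < v1"
    "separated (P \<union> set A1) u1 v1" using assms(1) unfolding flip_def by blast
  obtain A2 u2 v2 B2 where second: "x = A2 @ u2 # v2 # B2" "y2 = A2 @ v2 # u2 # B2" "u2 < v2"
    "separated (P \<union> set A2) u2 v2" using assms(2) unfolding flip_def by blast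
  consider "length A1 < length A2" | "length A2 < length A1" | "length A1 = length A2" by linarith
  then show ?thesis
  proof cases
    case 1
    then show ?thesis using ordered[of A1 u1 v1 B1 A2 u2 v2 B2] first second by auto
  next
    case 2
    then show ?thesis using ordered[of A2 u2 v2 B2 A1 u1 v1 B1] first second by auto
  next
    case 3
    then have "y1 = y2" using first second by (simp add: append_eq_append_conv)
    then show ?thesis by blast
  qed
qed

lemma confluentp_flip: "confluentp (flip P)"
proof (rule confluentp_if_terminating_locally_confluent)
  show "wfp (flip P)\<inverse>\<inverse>"
    by (rule wfp_if_convertible_to_nat[of _ weighted_sum]) (simp add: flip_weighted_sum)
qed (rule flip_local_confluence)

lemma equivclp_flip_common_reduct:
  assumes "equivclp (flip P) x y"
  shows "\<exists>t. (flip P)\<^sup>*\<^sup>* x t \<and> (flip P)\<^sup>*\<^sup>* y t"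
  using assms semiconfluentp_equivclp[OF confluentp_imp_semiconfluentp[OF confluentp_flip]]
  by (auto simp: rtranclp_conversep)

lemma flip_Sn:
  assumes "flip P x y"
  shows "x \<in> Sn n \<longleftrightarrow> y \<in> Sn n"
proof -
  obtain A u v B where "x = A @ u # v # B" "y = A @ v # u # B" using assms unfolding flip_def by blast
  then show ?thesis unfolding Sn_iff by auto
qed

lemma flips_Sn: "(flip P)\<^sup>*\<^sup>* x y \<Longrightarrow> x \<in> Sn n \<Longrightarrow> y \<in> Sn n"
  by (induction rule: rtranclp_induct) (auto simp: flip_Sn)

lemma flip_if_separator_placed:
  assumes "A @ p # q # B \<in> Sn n" "p < s" "s < q"
    and "s \<in> U \<longrightarrow> (p, s) \<in> inversions (A @ p # q # B)" "s \<notin> U \<longrightarrow> (s, q) \<in> inversions (A @ p # q # B)"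
  shows "flip {} (A @ p # q # B) (A @ q # p # B)"
proof -
  have dv: "distinct (A @ p # q # B)" and set_v: "set (A @ p # q # B) = {1..n}"
    using assms(1) unfolding Sn_iff by auto
  have "s \<in> path_verts (set A)"
  proof (cases "s \<in> U")
    case True
    then have "precedes (A @ p # (q # B)) s p" using assms(4) unfolding inversions_eq by simp
    then have "s \<in> set A" using precedes_before_iff[of A p "q # B"] dv by simp
    moreover have "s \<in> {1..n}" using True partition(1) by blast
    ultimately show ?thesis using True path_verts_iff[of s "set A"] by simp
  next
    case False
    then have "precedes ((A @ [p]) @ q # B) q s" using assms(5) unfolding inversions_eq by simp
    then have "s \<in> set B" using precedes_after_iff[of "A @ [p]" q B] dv by simp
    then have "s \<notin> set A" "s \<in> {1..n}" using dv set_v by auto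
    then show ?thesis using False path_verts_iff[of s "set A"] by auto
  qed
  then show ?thesis using flip_intro[of p s q "{}" A B] assms(2,3) by simp
qed

lemma flips_to_upper:
  assumes "v \<in> Sn n" "w \<in> Sn n" "inversions v \<subseteq> inversions w"
    and "\<And>p q. (p, q) \<in> inversions w - inversions v \<Longrightarrow>
      \<exists>s. p < s \<and> s < q \<and> (s \<in> U \<longrightarrow> (p, s) \<in> inversions v) \<and> (s \<notin> U \<longrightarrow> (s, q) \<in> inversions v)"
  shows "(flip {})\<^sup>*\<^sup>* v w"
  using assms
proof (induction "card (inversions w - inversions v)" arbitrary: v rule: less_induct)
  case less
  show ?case
  proof (cases "v = w")
    case False
    then obtain A p q B where v: "v = A @ p # q # B" and pq: "(p, q) \<in> inversions w"
      using adjacent_inversion_if_less[of v w] less.prems(1-3) unfolding Sn_iff by auto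
    have dv: "distinct (A @ p # q # B)" using less.prems(1) v unfolding Sn_iff by auto
    have "(p, q) \<notin> inversions v" using ascent_notin_inversions[OF dv] v by simp
    then obtain s where s: "p < s" "s < q" "s \<in> U \<longrightarrow> (p, s) \<in> inversions v" "s \<notin> U \<longrightarrow> (s, q) \<in> inversions v"
      using less.prems(4) pq by blast
    then have step: "flip {} v (A @ q # p # B)"
      using flip_if_separator_placed less.prems(1) unfolding v by blast
    have inv_step: "inversions (A @ q # p # B) = insert (p, q) (inversions v)"
      using inversions_swap[OF dv] s(1,2) v by simp
    have "(flip {})\<^sup>*\<^sup>* (A @ q # p # B) w"
    proof (rule less.hyps)
      have "inversions w - inversions (A @ q # p # B) \<subset> inversions w - inversions v"
        using inv_step pq \<open>(p, q) \<notin> inversions v\<close> by auto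
      then show "card (inversions w - inversions (A @ q # p # B)) < card (inversions w - inversions v)"
        using finite_inversions[OF less.prems(2)] by (meson finite_Diff psubset_card_mono)
      show "A @ q # p # B \<in> Sn n" using flip_Sn[OF step] less.prems(1) by simp
      show "inversions (A @ q # p # B) \<subseteq> inversions w" using inv_step pq less.prems(3) by auto
      show "w \<in> Sn n" by (rule less.prems(2))
      fix p' q' assume "(p', q') \<in> inversions w - inversions (A @ q # p # B)"
      then have "(p', q') \<in> inversions w - inversions v" using inv_step by auto
      then show "\<exists>s. p' < s \<and> s < q' \<and> (s \<in> U \<longrightarrow> (p', s) \<in> inversions (A @ q # p # B)) \<and>
          (s \<notin> U \<longrightarrow> (s, q') \<in> inversions (A @ q # p # B))"
        using less.prems(4) inv_step by blast
    qed
    then show ?thesis using step by (simp add: converse_rtranclp_into_rtranclp)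
  qed simp
qed

lemma separator_outside_block:
  assumes "A @ a # c # B \<in> Sn n" "a < s" "s < c" "s \<in> path_verts (set A)"
    and "distinct (\<alpha> @ a # \<beta> @ c # \<gamma>)" "inversions (A @ a # c # B) \<subseteq> inversions (\<alpha> @ a # \<beta> @ c # \<gamma>)"
  shows "s \<in> U \<Longrightarrow> s \<in> set \<alpha>" and "s \<notin> U \<Longrightarrow> s \<in> set \<gamma>"
proof -
  have dx: "distinct (A @ a # c # B)" and set_x: "set (A @ a # c # B) = {1..n}"
    using assms(1) unfolding Sn_iff by auto
  from set_x have "a \<in> {1..n}" "c \<in> {1..n}" by auto
  then have "s \<in> {1..n}" using assms(2,3) by auto
  show "s \<in> set \<alpha>" if "s \<in> U"
  proof -
    have "s \<in> set A" using assms(4) that path_verts_iff \<open>s \<in> {1..n}\<close> by auto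
    then have "(a, s) \<in> inversions (\<alpha> @ a # \<beta> @ c # \<gamma>)"
      using assms(2,6) dx unfolding inversions_eq by (auto simp: precedes_append)
    then show ?thesis
      using precedes_before_iff[of \<alpha> a "\<beta> @ c # \<gamma>"] assms(5) unfolding inversions_eq by auto
  qed
  show "s \<in> set \<gamma>" if "s \<notin> U"
  proof -
    have "s \<notin> set A" using assms(4) that path_verts_iff \<open>s \<in> {1..n}\<close> by auto
    then have "s \<in> set B" using \<open>s \<in> {1..n}\<close> assms(2,3) set_x by auto
    then have "(s, c) \<in> inversions ((\<alpha> @ a # \<beta>) @ c # \<gamma>)"
      using assms(3,6) dx unfolding inversions_eq by (auto simp: precedes_append)
    then show ?thesis
      using precedes_after_iff[of "\<alpha> @ a # \<beta>" c \<gamma>] assms(5) unfolding inversions_eq by auto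
  qed
qed

lemma weak_join_flip:
  assumes x: "x \<in> Sn n" and "flip {} x x'" and join: "is_weak_join n x z w"
  shows "\<exists>w'. is_weak_join n x' z w' \<and> (flip {})\<^sup>*\<^sup>* w w'"
proof -
  obtain A a c B s where x_eq: "x = A @ a # c # B" and x'_eq: "x' = A @ c # a # B"
    and s: "a < s" "s < c" "s \<in> path_verts (set A)"
    using assms(2) unfolding flip_def separated_def by auto
  then have "a < c" by simp
  have dx: "distinct x" and wS: "w \<in> Sn n" and xw: "inversions x \<subseteq> inversions w"
    using x join unfolding is_weak_join_def weak_le_def Sn_iff by auto
  have inv_x': "inversions x' = insert (a, c) (inversions x)"
    unfolding x_eq x'_eq using inversions_swap dx \<open>a < c\<close> x_eq by simp
  show ?thesis
  proof (cases "precedes w c a")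
    case True
    then show ?thesis using weak_join_insert_inversion[OF join inv_x'] \<open>a < c\<close> unfolding inversions_eq by auto
  next
    case False
    have "a \<in> set w" "c \<in> set w" using x wS x_eq unfolding Sn_iff by auto
    then have "precedes w a c" using False precedes_total[of a w c] \<open>a < c\<close> by auto
    then obtain \<alpha> \<beta> \<gamma> where w: "w = \<alpha> @ a # \<beta> @ c # \<gamma>" using precedes_split by metis
    define w' where "w' = \<alpha> @ filter ((<) c) \<beta> @ c # a # filter (\<lambda>v. v < a) \<beta> @ \<gamma>"
    note w'_props = weak_join_after_ascent_swap[OF x[unfolded x_eq] \<open>a < c\<close> join[unfolded x_eq] w,
      folded x'_eq w'_def]
    have dw: "distinct (\<alpha> @ a # \<beta> @ c # \<gamma>)" using wS w unfolding Sn_iff by simp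
    note s_outside = separator_outside_block[OF x[unfolded x_eq] s dw xw[unfolded x_eq w]]
    have "(flip {})\<^sup>*\<^sup>* w w'"
    proof (rule flips_to_upper[OF wS])
      show "w' \<in> Sn n" using w'_props(1) unfolding is_weak_join_def by simp
      show "inversions w \<subseteq> inversions w'" using w'_props(2) by auto
      fix p q assume "(p, q) \<in> inversions w' - inversions w"
      then have "p = a \<or> p \<in> set \<beta> \<and> p < a" "q = c \<or> q \<in> set \<beta> \<and> c < q"
        using w'_props(2) by auto
      moreover have "s \<in> U \<longrightarrow> precedes w s p" "s \<notin> U \<longrightarrow> precedes w q s"
        using s_outside calculation unfolding w by (auto simp: precedes_append)
      ultimately show "\<exists>s. p < s \<and> s < q \<and> (s \<in> U \<longrightarrow> (p, s) \<in> inversions w) \<and> (s \<notin> U \<longrightarrow> (s, q) \<in> inversions w)"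
        using s(1,2) unfolding inversions_eq by (intro exI[of _ s]) auto
    qed
    then show ?thesis using w'_props(1) by blast
  qed
qed

lemma weak_join_flips:
  assumes "(flip {})\<^sup>*\<^sup>* x t" "x \<in> Sn n" "is_weak_join n x z j"
  shows "\<exists>j'. is_weak_join n t z j' \<and> (flip {})\<^sup>*\<^sup>* j j'"
  using assms(1)
proof (induction rule: rtranclp_induct)
  case (step y t)
  then obtain jy where "is_weak_join n y z jy" "(flip {})\<^sup>*\<^sup>* j jy" by blast
  moreover have "y \<in> Sn n" using flips_Sn step.hyps(1) assms(2) by blast
  ultimately show ?case using weak_join_flip[OF _ step.hyps(2)] by (meson rtranclp_trans)
qed (use assms(3) in blast)

lemma eta_weak_join_congruent:
  assumes "x \<in> Sn n" "y \<in> Sn n" "eta n U D x = eta n U D y"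
    and "is_weak_join n x z j" "is_weak_join n y z j'"
  shows "eta n U D j = eta n U D j'"
proof -
  obtain t where "(flip {})\<^sup>*\<^sup>* x t" "(flip {})\<^sup>*\<^sup>* y t"
    using equivclp_flip_common_reduct assms(1-3) eta_eq_iff_equivclp_flip by blast
  then obtain jx jy where jx: "is_weak_join n t z jx" "(flip {})\<^sup>*\<^sup>* j jx"
    and jy: "is_weak_join n t z jy" "(flip {})\<^sup>*\<^sup>* j' jy"
    using weak_join_flips assms(1,2,4,5) by metis
  have "jx = jy" using jx(1) jy(1) by (rule weak_join_unique)
  moreover have "j \<in> Sn n" "j' \<in> Sn n" "jx \<in> Sn n"
    using assms(4,5) jx(1) unfolding is_weak_join_def by auto
  ultimately show ?thesis
    using jx(2) jy(2) eta_eq_iff_equivclp_flip rtranclp_into_equivclp by metis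
qed

lemma lam_rev:
  assumes "x \<in> Sn n" "t \<le> n"
  shows "lam n U (rev x) t = lam n D x (n - t)"
proof -
  interpret swapped: polygon_partition n D U using partition by unfold_locales auto
  have dx: "distinct x" and set_x: "set x = {1..n}" and len: "length x = n"
    using assms(1) Sn_length unfolding Sn_iff by auto
  have "set (take (n - t) x) \<union> set (drop (n - t) x) = {1..n}"
    using set_x by (metis set_append append_take_drop_id)
  moreover have "set (take (n - t) x) \<inter> set (drop (n - t) x) = {}"
    using set_take_disj_set_drop_if_distinct[OF dx order_refl] .
  moreover have "set (take t (rev x)) = set (drop (n - t) x)" using len by (simp add: take_rev)
  ultimately have "set (take t (rev x)) = {1..n} - set (take (n - t) x)" by blast
  moreover have "set (take (n - t) x) \<subseteq> {1..n}" using set_x set_take_subset by metis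
  ultimately show ?thesis
    unfolding swapped.lam_eq_path_verts[OF rev_Sn[OF assms(1)]] lam_eq_path_verts[OF assms(1)]
      swapped.path_verts_def path_verts_def using partition by auto
qed

lemma eta_rev:
  assumes "x \<in> Sn n"
  shows "eta n D U (rev x) = eta n U D x"
proof -
  have "Q_diagonals n D U = Q_diagonals n U D" unfolding Q_diagonals_def Q_edges_def by auto
  moreover have "(\<exists>i\<le>n. e \<in> path_edges (lam n U (rev x) i)) \<longleftrightarrow> (\<exists>i\<le>n. e \<in> path_edges (lam n D x i))" for e
    using lam_rev[OF assms] by (metis diff_diff_cancel diff_le_self)
  ultimately show ?thesis unfolding eta_def by simp
qed

lemma eta_weak_meet_congruent:
  assumes "x \<in> Sn n" "y \<in> Sn n" "eta n U D x = eta n U D y"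
    and "z \<in> Sn n" "is_weak_meet n x z m" "is_weak_meet n y z m'"
  shows "eta n U D m = eta n U D m'"
proof -
  interpret swapped: polygon_partition n D U using partition by unfold_locales auto
  have m: "m \<in> Sn n" "m' \<in> Sn n" using assms(5,6) unfolding is_weak_meet_def by auto
  have "eta n D U (rev x) = eta n D U (rev y)" using assms(1-3) eta_rev by simp
  then have "eta n D U (rev m) = eta n D U (rev m')"
    using swapped.eta_weak_join_congruent[OF rev_Sn[OF assms(1)] rev_Sn[OF assms(2)] _
        weak_join_rev_if_meet[OF assms(1,4,5)] weak_join_rev_if_meet[OF assms(2,4,6)]] by simp
  then show ?thesis using m eta_rev by simp
qed

end

theorem theorem5p1:
  fixes n :: nat and U D :: "nat set"
  assumes "U \<union> D = {1..n}" and "U \<inter> D = {}"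
  shows "weak_lattice_congruence n
           {(x, y). x \<in> Sn n \<and> y \<in> Sn n \<and> eta n U D x = eta n U D y}"
proof -
  interpret polygon_partition n U D using assms by unfold_locales
  let ?R = "{(x, y). x \<in> Sn n \<and> y \<in> Sn n \<and> eta n U D x = eta n U D y}"
  have "equiv (Sn n) ?R" by (rule equivI) (auto simp: refl_on_def sym_def trans_def)
  moreover have "(j, j') \<in> ?R" if "(x, y) \<in> ?R" "is_weak_join n x z j" "is_weak_join n y z j'" for x y z j j'
  proof -
    have "j \<in> Sn n" "j' \<in> Sn n" using that(2,3) unfolding is_weak_join_def by auto
    then show ?thesis using that eta_weak_join_congruent[of x y z j j'] by simp
  qed
  moreover have "(m, m') \<in> ?R"
    if "(x, y) \<in> ?R" "z \<in> Sn n" "is_weak_meet n x z m" "is_weak_meet n y z m'" for x y z m m'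
  proof -
    have "m \<in> Sn n" "m' \<in> Sn n" using that(3,4) unfolding is_weak_meet_def by auto
    then show ?thesis using that eta_weak_meet_congruent[of x y z m m'] by simp
  qed
  ultimately show ?thesis unfolding weak_lattice_congruence_def by blast
qed

end
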